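(* Let $\mathcal E=\{\lambda_x,\rho_x\}_{x=1}^n$ be an ensemble of states on a finite-dimensional system $A$, let $M=(M_1,\dots,M_{d_S})$ be a measurement on $A$, and let $R$ be a system with $d_R=n$. Then $$P^Q_{\rm succ}(\mathcal E,M)=\|(\Phi_M\otimes\mathrm{id}_R)(\rho_{\mathcal E})\|^\diamond_{R|S}=P_{\rm succ}(\Phi_M(\mathcal E)).$$
   Context: $S$ is a system of dimension $d_S$ with basis $\{|j\rangle\}$; $\Phi_M\in\mathcal C(A,S)$ is the quantum-to-classical channel $\Phi_M(\sigma)=\sum_j{\rm Tr}[\sigma M_j]|j\rangle\langle j|$. $\rho_{\mathcal E}=\sum_x\lambda_x\rho_x\otimes|x\rangle\langle x|\in\mathfrak S(AR)$. $\Phi_M(\mathcal E)=\{\lambda_x,\Phi_M(\rho_x)\}$. $P^Q_{\rm succ}(\mathcal E,M)=\sup\sum_{x,j}\lambda_xp(x|j){\rm Tr}[\rho_xM_j]$ over conditional probabilities $p(x|j)$; $P_{\rm succ}(\mathcal E')=\max_N\sum_x\lambda_x{\rm Tr}[\rho'_xN_x]$ over $n$-outcome measurements $N$. For $X\in\mathcal B_h(SR)$ and $\phi\in\mathcal L(S,R)$, $\langle X,\phi\rangle={\rm Tr}[XC_{\phi^*}]$ where $C_\psi=(\psi\otimes\mathrm{id})(|I\rangle\rangle\langle\langle I|)$ is the Choi matrix and $\phi^*$ the adjoint; $\|X\|^\diamond_{R|S}=\max_{\alpha\in\mathcal C(S,R)}\langle X,\alpha\rangle$ for $X\ge0$. 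*)

theory Defs
  imports "Jordan_Normal_Form.Matrix"
begin

(* Finite-dimensional quantum systems are modelled by their dimension d;
   operators are complex d x d matrices (Jordan_Normal_Form "mat").
   Composite systems X Y use the Kronecker ordering: basis index (x,y) ~ x * dY + y. *)

definition msum :: "nat \<Rightarrow> (nat \<Rightarrow> complex mat) \<Rightarrow> nat set \<Rightarrow> complex mat" where
  "msum d f I = mat d d (\<lambda>(i,j). \<Sum>x\<in>I. f x $$ (i,j))"

definition mtrace :: "complex mat \<Rightarrow> complex" where
  "mtrace A = (\<Sum>i<dim_row A. A $$ (i,i))"

definition cadj :: "complex mat \<Rightarrow> complex mat" where
  "cadj A = mat (dim_col A) (dim_row A) (\<lambda>(i,j). cnj (A $$ (j,i)))"

definition psd :: "nat \<Rightarrow> complex mat \<Rightarrow> bool" where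
  "psd d A \<longleftrightarrow> A \<in> carrier_mat d d \<and>
     (\<forall>v \<in> carrier_vec d. let q = (\<Sum>i<d. cnj (vec_index v i) * vec_index (A *\<^sub>v v) i) in Im q = 0 \<and> Re q \<ge> 0)"

definition state :: "nat \<Rightarrow> complex mat \<Rightarrow> bool" where
  "state d \<rho> \<longleftrightarrow> psd d \<rho> \<and> mtrace \<rho> = 1"

definition povm :: "nat \<Rightarrow> nat \<Rightarrow> (nat \<Rightarrow> complex mat) \<Rightarrow> bool" where
  "povm d m M \<longleftrightarrow> (\<forall>j<m. psd d (M j)) \<and> msum d (\<lambda>j. M j) {..<m} = 1\<^sub>m d"

definition munit :: "nat \<Rightarrow> nat \<Rightarrow> nat \<Rightarrow> complex mat" where
  "munit d i j = mat d d (\<lambda>(a,b). if a = i \<and> b = j then 1 else 0)"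

definition kron :: "complex mat \<Rightarrow> complex mat \<Rightarrow> complex mat" where
  "kron A B = mat (dim_row A * dim_row B) (dim_col A * dim_col B)
     (\<lambda>(i,j). A $$ (i div dim_row B, j div dim_col B) * B $$ (i mod dim_row B, j mod dim_col B))"

(* (phi \<otimes> id_k)(X) for phi : L(C^dIn) -> L(C^dOut) and X an operator on C^dIn \<otimes> C^k *)
definition tensor_id :: "nat \<Rightarrow> nat \<Rightarrow> nat \<Rightarrow> (complex mat \<Rightarrow> complex mat) \<Rightarrow> complex mat \<Rightarrow> complex mat" where
  "tensor_id dIn dOut k \<phi> X = mat (dOut * k) (dOut * k) (\<lambda>(i,j).
      \<phi> (mat dIn dIn (\<lambda>(s,s'). X $$ (s * k + i mod k, s' * k + j mod k))) $$ (i div k, j div k))"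

(* quantum channel in C(In,Out): linear, completely positive, trace preserving *)
definition channel :: "nat \<Rightarrow> nat \<Rightarrow> (complex mat \<Rightarrow> complex mat) \<Rightarrow> bool" where
  "channel dIn dOut \<phi> \<longleftrightarrow>
     (\<forall>X \<in> carrier_mat dIn dIn. \<phi> X \<in> carrier_mat dOut dOut) \<and>
     (\<forall>X \<in> carrier_mat dIn dIn. \<forall>Y \<in> carrier_mat dIn dIn. \<phi> (X + Y) = \<phi> X + \<phi> Y) \<and>
     (\<forall>X \<in> carrier_mat dIn dIn. \<forall>c. \<phi> (c \<cdot>\<^sub>m X) = c \<cdot>\<^sub>m \<phi> X) \<and>
     (\<forall>k. \<forall>X. psd (dIn * k) X \<longrightarrow> psd (dOut * k) (tensor_id dIn dOut k \<phi> X)) \<and>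
     (\<forall>X \<in> carrier_mat dIn dIn. mtrace (\<phi> X) = mtrace X)"

(* Hilbert-Schmidt adjoint phi* : L(C^dOut) -> L(C^dIn) of phi : L(C^dIn) -> L(C^dOut),
   characterised by Tr[phi(X)^H Y] = Tr[X^H phi*(Y)]; entrywise
   phi*(Y)_{s,s'} = Tr[phi(|s><s'|)^H Y]. *)
definition hs_adjoint :: "nat \<Rightarrow> (complex mat \<Rightarrow> complex mat) \<Rightarrow> complex mat \<Rightarrow> complex mat" where
  "hs_adjoint dIn \<phi> Y = mat dIn dIn (\<lambda>(s,s'). mtrace (cadj (\<phi> (munit dIn s s')) * Y))"

(* Choi matrix C_psi = (psi \<otimes> id)(|I>><<I|) = sum_{i,i'} psi(|i><i'|) \<otimes> |i><i'|,
   for psi : L(C^dIn) -> L(C^dOut); an operator on C^dOut \<otimes> C^dIn *)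
definition choi :: "nat \<Rightarrow> nat \<Rightarrow> (complex mat \<Rightarrow> complex mat) \<Rightarrow> complex mat" where
  "choi dIn dOut \<psi> = tensor_id dIn dOut dIn \<psi>
      (mat (dIn * dIn) (dIn * dIn) (\<lambda>(a,b). if a mod (dIn + 1) = 0 \<and> b mod (dIn + 1) = 0 then 1 else 0))"

definition pairing :: "nat \<Rightarrow> nat \<Rightarrow> complex mat \<Rightarrow> (complex mat \<Rightarrow> complex mat) \<Rightarrow> complex" where
  "pairing dS dR X \<phi> = mtrace (X * choi dR dS (hs_adjoint dS \<phi>))"

definition dnorm_RS :: "nat \<Rightarrow> nat \<Rightarrow> complex mat \<Rightarrow> real" where
  "dnorm_RS dS dR X = Sup {Re (pairing dS dR X \<alpha>) | \<alpha>. channel dS dR \<alpha>}"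

definition qc_channel :: "nat \<Rightarrow> (nat \<Rightarrow> complex mat) \<Rightarrow> complex mat \<Rightarrow> complex mat" where
  "qc_channel dS M \<sigma> = mat dS dS (\<lambda>(i,j). if i = j then mtrace (\<sigma> * M i) else 0)"

definition cq_state :: "nat \<Rightarrow> nat \<Rightarrow> (nat \<Rightarrow> real) \<Rightarrow> (nat \<Rightarrow> complex mat) \<Rightarrow> complex mat" where
  "cq_state dA n lam \<rho> = msum (dA * n)
      (\<lambda>x. complex_of_real (lam x) \<cdot>\<^sub>m kron (\<rho> x) (munit n x x)) {..<n}"

definition ensemble :: "nat \<Rightarrow> nat \<Rightarrow> (nat \<Rightarrow> real) \<Rightarrow> (nat \<Rightarrow> complex mat) \<Rightarrow> bool" where
  "ensemble d n lam \<rho> \<longleftrightarrow> (\<forall>x<n. lam x \<ge> 0 \<and> state d (\<rho> x)) \<and> (\<Sum>x<n. lam x) = 1"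

definition Psucc_Q :: "nat \<Rightarrow> (nat \<Rightarrow> real) \<Rightarrow> (nat \<Rightarrow> complex mat) \<Rightarrow> nat \<Rightarrow> (nat \<Rightarrow> complex mat) \<Rightarrow> real" where
  "Psucc_Q n lam \<rho> m M = Sup {(\<Sum>x<n. \<Sum>j<m. lam x * p x j * Re (mtrace (\<rho> x * M j))) | p.
      (\<forall>x<n. \<forall>j<m. p x j \<ge> 0) \<and> (\<forall>j<m. (\<Sum>x<n. p x j) = 1)}"

definition Psucc :: "nat \<Rightarrow> nat \<Rightarrow> (nat \<Rightarrow> real) \<Rightarrow> (nat \<Rightarrow> complex mat) \<Rightarrow> real" where
  "Psucc d n lam \<rho> = Sup {(\<Sum>x<n. lam x * Re (mtrace (\<rho> x * N x))) | N. povm d n N}"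

end

theory Submission
  imports Defs
begin

text \<open>All three quantities equal \<open>\<Sum>\<^sub>j max\<^sub>x \<lambda>\<^sub>x Tr[\<rho>\<^sub>x M\<^sub>j]\<close>. Each is a supremum of
  averages \<open>\<Sum>\<^sub>j \<Sum>\<^sub>x w(x|j) \<lambda>\<^sub>x Tr[\<rho>\<^sub>x M\<^sub>j]\<close> over some family of conditional
  distributions \<open>w\<close>: the post-processings \<open>p(x|j)\<close> themselves; the diagonals \<open>(N\<^sub>x)\<^sub>j\<^sub>j\<close>
  of a POVM, since the states \<open>\<Phi>\<^sub>M(\<rho>\<^sub>x)\<close> are diagonal; and, since
  \<open>(\<Phi>\<^sub>M \<otimes> id)(\<rho>\<^sub>\<E>)\<close> is diagonal, the diagonals of \<open>\<alpha>(|j\<rangle>\<langle>j|)\<close> for channels \<open>\<alpha>\<close>.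
  Every such average is bounded by the pointwise maximum, and the deterministic guess of a
  maximising \<open>x\<close> for each outcome \<open>j\<close> belongs to all three families: as a diagonal POVM and
  as the channel that measures \<open>j\<close> and prepares \<open>|f j\<rangle>\<close>.\<close>

lemma sum_lessThan_mult_eq:
  fixes g :: "nat \<Rightarrow> 'a::comm_monoid_add"
  shows "(\<Sum>i<m * k. g i) = (\<Sum>p<m. \<Sum>c<k. g (p * k + c))"
proof -
  have "(\<Sum>i\<in>{p * k..<p * k + k}. g i) = (\<Sum>c<k. g (p * k + c))" for p
    by (rule sum.reindex_bij_witness[of _ "\<lambda>c. p * k + c" "\<lambda>i. i - p * k"]) auto
  then show ?thesis by (simp add: sum.nat_group[of g k m, symmetric])
qed

lemma mult_add_less_mult: "p < m \<Longrightarrow> c < k \<Longrightarrow> p * k + c < m * (k::nat)"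
  using mult_le_mono1[of "Suc p" m k] by simp

lemma div_mod_less_mult: "i < m * (k::nat) \<Longrightarrow> i div k < m \<and> i mod k < k"
  by (metis less_mult_imp_div_less mod_less_divisor mult_eq_0_iff not_gr_zero not_less0)

definition stochastic :: "nat \<Rightarrow> nat \<Rightarrow> (nat \<Rightarrow> nat \<Rightarrow> real) \<Rightarrow> bool" where
  "stochastic n m w \<longleftrightarrow> (\<forall>j<m. (\<forall>x<n. 0 \<le> w x j) \<and> (\<Sum>x<n. w x j) = 1)"

definition optimal_guess :: "nat \<Rightarrow> nat \<Rightarrow> (nat \<Rightarrow> nat \<Rightarrow> real) \<Rightarrow> (nat \<Rightarrow> nat) \<Rightarrow> bool" where
  "optimal_guess n m q f \<longleftrightarrow> (\<forall>j<m. f j < n \<and> (\<forall>x<n. q x j \<le> q (f j) j))"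

lemma optimal_guess_exists:
  assumes "0 < n"
  shows "\<exists>f. optimal_guess n m q f"
proof -
  have "\<exists>x<n. \<forall>x'<n. q x' j \<le> q x j" for j
  proof -
    let ?S = "(\<lambda>x. q x j) ` {..<n}"
    have "Max ?S \<in> ?S" using assms by (intro Max_in) auto
    then obtain x where "x < n" "q x j = Max ?S" by auto
    then show ?thesis by auto
  qed
  then show ?thesis unfolding optimal_guess_def by metis
qed

lemma stochastic_deterministic: "\<forall>j<m. f j < n \<Longrightarrow> stochastic n m (\<lambda>x j. if x = f j then 1 else 0)"
  by (simp add: stochastic_def)

lemma sum_deterministic_average:
  fixes w q :: "nat \<Rightarrow> nat \<Rightarrow> real"
  assumes f: "\<forall>j<m. f j < n" and w: "\<And>x j. j < m \<Longrightarrow> x < n \<Longrightarrow> w x j = (if x = f j then 1 else 0)"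
  shows "(\<Sum>j<m. \<Sum>x<n. w x j * q x j) = (\<Sum>j<m. q (f j) j)"
proof (rule sum.cong[OF refl])
  fix j assume j: "j \<in> {..<m}"
  then have "(\<Sum>x<n. w x j * q x j) = (\<Sum>x<n. if x = f j then q x j else 0)"
    using w by (intro sum.cong) auto
  also have "\<dots> = q (f j) j"
    using f j by simp
  finally show "(\<Sum>x<n. w x j * q x j) = q (f j) j" .
qed

lemma stochastic_average_le_optimal_guess:
  assumes w: "stochastic n m w" and f: "optimal_guess n m q f"
  shows "(\<Sum>j<m. \<Sum>x<n. w x j * q x j) \<le> (\<Sum>j<m. q (f j) j)"
proof (rule sum_mono)
  fix j assume j: "j \<in> {..<m}"
  then have "(\<Sum>x<n. w x j * q x j) \<le> (\<Sum>x<n. w x j * q (f j) j)"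
    using w f by (intro sum_mono mult_left_mono) (auto simp: stochastic_def optimal_guess_def)
  also have "\<dots> = q (f j) j"
    using w j by (simp add: stochastic_def sum_distrib_right[symmetric])
  finally show "(\<Sum>x<n. w x j * q x j) \<le> q (f j) j" .
qed

lemma cSup_eq_optimal_guess:
  assumes f: "optimal_guess n m q f"
    and averages: "\<And>y. y \<in> Y \<Longrightarrow> \<exists>w. stochastic n m w \<and> y = (\<Sum>j<m. \<Sum>x<n. w x j * q x j)"
    and attained: "(\<Sum>j<m. q (f j) j) \<in> Y"
  shows "Sup Y = (\<Sum>j<m. q (f j) j)"
proof (rule cSup_eq_maximum[OF attained])
  fix y assume "y \<in> Y"
  then show "y \<le> (\<Sum>j<m. q (f j) j)"
    using averages stochastic_average_le_optimal_guess[OF _ f] by blast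
qed

definition quad_form :: "nat \<Rightarrow> complex mat \<Rightarrow> complex vec \<Rightarrow> complex" where
  "quad_form d A v = (\<Sum>i<d. \<Sum>j<d. cnj (v $ i) * A $$ (i,j) * v $ j)"

lemma psd_iff_quad_form:
  "psd d A \<longleftrightarrow> A \<in> carrier_mat d d \<and>
     (\<forall>v\<in>carrier_vec d. Im (quad_form d A v) = 0 \<and> 0 \<le> Re (quad_form d A v))"
proof -
  have quad: "(\<Sum>i<d. cnj (v $ i) * (A *\<^sub>v v) $ i) = quad_form d A v"
    if A: "A \<in> carrier_mat d d" and v: "v \<in> carrier_vec d" for v
  proof -
    have "cnj (v $ i) * (A *\<^sub>v v) $ i = (\<Sum>j<d. cnj (v $ i) * A $$ (i,j) * v $ j)" if "i < d" for i
      using A v that by (simp add: scalar_prod_def lessThan_atLeast0 sum_distrib_left ac_simps)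
    then show ?thesis
      unfolding quad_form_def by (intro sum.cong) auto
  qed
  show ?thesis
  proof (cases "A \<in> carrier_mat d d")
    case True
    then show ?thesis using quad[OF True] by (simp add: psd_def Let_def)
  qed (simp add: psd_def)
qed

lemma psd_carrier_mat: "psd d A \<Longrightarrow> A \<in> carrier_mat d d"
  by (simp add: psd_def)

lemma psd_diag_entry:
  assumes A: "psd d A" and a: "a < d"
  shows "Im (A $$ (a,a)) = 0 \<and> 0 \<le> Re (A $$ (a,a))"
proof -
  let ?e = "unit_vec d a"
  have "(\<Sum>i<d. cnj (?e $ i) * (A *\<^sub>v ?e) $ i) = (\<Sum>i<d. if i = a then (A *\<^sub>v ?e) $ a else 0)"
    by (rule sum.cong) (auto simp: unit_vec_def)
  also have "\<dots> = A $$ (a,a)"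
    using psd_carrier_mat[OF A] a by (simp add: row_def)
  finally show ?thesis
    using A unfolding psd_def Let_def by (metis unit_vec_carrier)
qed

lemma sum_if_eq_mult:
  "(\<Sum>j<(d::nat). (if i = j then a else 0) * g j) = (if i < d then a * g i else (0::'a::semiring_0))"
  by (induct d) (auto simp: less_Suc_eq)

lemma psd_mat_diag:
  assumes w: "\<forall>i<d. Im (w i) = 0 \<and> 0 \<le> Re (w i)"
  shows "psd d (mat_diag d w)"
proof -
  let ?D = "mat d d (\<lambda>(i,j). if i = j then w i else 0)"
  have D: "mat_diag d w = ?D"
    by (rule eq_matI) (auto simp: mat_diag_def)
  have "Im q = 0 \<and> 0 \<le> Re q" if v: "v \<in> carrier_vec d"
    and q: "q = (\<Sum>i<d. cnj (v $ i) * (?D *\<^sub>v v) $ i)" for v q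
  proof -
    have "(?D *\<^sub>v v) $ i = w i * v $ i" if "i < d" for i
    proof -
      have "(?D *\<^sub>v v) $ i = (\<Sum>j<d. (if i = j then w i else 0) * v $ j)"
        using that v by (simp add: scalar_prod_def row_def lessThan_atLeast0)
      then show ?thesis using that by (simp add: sum_if_eq_mult)
    qed
    then have "q = (\<Sum>i<d. w i * complex_of_real ((Re (v $ i))\<^sup>2 + (Im (v $ i))\<^sup>2))"
      unfolding q by (intro sum.cong refl) (simp add: complex_mult_cnj ac_simps)
    then show ?thesis
      using w by (auto simp: Im_sum Re_sum intro!: sum_nonneg)
  qed
  then show ?thesis
    unfolding D psd_def Let_def by simp
qed

lemma mtrace_mat_diag_mult:
  assumes N: "N \<in> carrier_mat d d"
  shows "mtrace (mat_diag d w * N) = (\<Sum>i<d. w i * N $$ (i,i))"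
proof -
  have DN: "mat_diag d w * N = mat d d (\<lambda>(i,j). w i * N $$ (i,j))"
    by (rule mat_diag_mult_left[OF N])
  show ?thesis
    unfolding mtrace_def DN by (intro sum.cong) auto
qed

lemma mtrace_smult: "A \<in> carrier_mat d d \<Longrightarrow> mtrace (c \<cdot>\<^sub>m A) = c * mtrace A"
  by (auto simp: mtrace_def sum_distrib_left intro!: sum.cong)

lemma qc_channel_eq_mat_diag: "qc_channel m M \<sigma> = mat_diag m (\<lambda>j. mtrace (\<sigma> * M j))"
  by (rule eq_matI) (auto simp: qc_channel_def mat_diag_def)

lemma munit_eq_mat_diag: "munit d k k = mat_diag d (\<lambda>i. if i = k then 1 else 0)"
  by (rule eq_matI) (auto simp: munit_def mat_diag_def)

lemma channel_carrier: "channel d d' \<phi> \<Longrightarrow> X \<in> carrier_mat d d \<Longrightarrow> \<phi> X \<in> carrier_mat d' d'"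
  by (simp add: channel_def)

lemma tensor_id_one:
  assumes "X \<in> carrier_mat d d" "\<phi> X \<in> carrier_mat d' d'"
  shows "tensor_id d d' 1 \<phi> X = \<phi> X"
proof -
  have "mat d d (\<lambda>(s,s'). X $$ (s * 1 + i mod 1, s' * 1 + j mod 1)) = X" for i j
    using assms(1) by (intro eq_matI) auto
  then show ?thesis using assms(2) by (intro eq_matI) (auto simp: tensor_id_def)
qed

lemma channel_psd:
  assumes "channel d d' \<phi>" "psd d X"
  shows "psd d' (\<phi> X)"
proof -
  have "psd (d' * 1) (tensor_id d d' 1 \<phi> X)"
    using assms unfolding channel_def by (metis mult_1_right)
  then show ?thesis
    using tensor_id_one assms channel_carrier psd_carrier_mat by (metis mult_1_right)
qed

lemma channel_munit_diag:
  assumes ch: "channel d n \<alpha>"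
  shows "stochastic n d (\<lambda>a k. Re (\<alpha> (munit d k k) $$ (a,a)))"
    and "k < d \<Longrightarrow> a < n \<Longrightarrow> Im (\<alpha> (munit d k k) $$ (a,a)) = 0"
proof -
  have munit: "munit d k k \<in> carrier_mat d d" for k
    by (simp add: munit_def)
  have psd: "psd n (\<alpha> (munit d k k))" for k
    using channel_psd[OF ch] by (simp add: munit_eq_mat_diag psd_mat_diag)
  have "(\<Sum>a<n. \<alpha> (munit d k k) $$ (a,a)) = 1" if "k < d" for k
  proof -
    have "mtrace (\<alpha> (munit d k k)) = mtrace (munit d k k)"
      using ch munit by (simp add: channel_def)
    then show ?thesis
      using that carrier_matD(1)[OF channel_carrier[OF ch munit]] by (simp add: mtrace_def munit_def)
  qed
  then have "(\<Sum>a<n. Re (\<alpha> (munit d k k) $$ (a,a))) = 1" if "k < d" for k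
    using that by (metis Re_sum one_complex.simps(1))
  then show "stochastic n d (\<lambda>a k. Re (\<alpha> (munit d k k) $$ (a,a)))"
    using psd_diag_entry[OF psd] by (simp add: stochastic_def)
  show "k < d \<Longrightarrow> a < n \<Longrightarrow> Im (\<alpha> (munit d k k) $$ (a,a)) = 0"
    using psd_diag_entry[OF psd] by simp
qed

lemma sum_eq_single:
  "finite A \<Longrightarrow> a \<in> A \<Longrightarrow> (\<And>x. x \<in> A \<Longrightarrow> x \<noteq> a \<Longrightarrow> g x = 0) \<Longrightarrow> sum g A = g a"
  using sum.mono_neutral_right[of A "{a}" g] by auto

lemma quad_form_block_vec:
  assumes s: "s < d"
  shows "quad_form (d * k) X (vec (d * k) (\<lambda>i. if i div k = s then u (i mod k) else 0))
    = (\<Sum>c<k. \<Sum>c'<k. cnj (u c) * X $$ (s * k + c, s * k + c') * u c')"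
proof -
  let ?w = "vec (d * k) (\<lambda>i. if i div k = s then u (i mod k) else 0)"
  have w: "?w $ (s' * k + c) = (if s' = s then u c else 0)" if "s' < d" "c < k" for s' c
    using that by (simp add: mult_add_less_mult)
  have "quad_form (d * k) X ?w
      = (\<Sum>s1<d. \<Sum>c<k. \<Sum>s2<d. \<Sum>c'<k. cnj (?w $ (s1 * k + c)) * X $$ (s1 * k + c, s2 * k + c') * ?w $ (s2 * k + c'))"
    unfolding quad_form_def sum_lessThan_mult_eq ..
  also have "\<dots> = (\<Sum>c<k. \<Sum>s2<d. \<Sum>c'<k. cnj (?w $ (s * k + c)) * X $$ (s * k + c, s2 * k + c') * ?w $ (s2 * k + c'))"
    by (rule sum_eq_single) (use s in \<open>auto simp: w\<close>)
  also have "\<dots> = (\<Sum>c<k. \<Sum>c'<k. cnj (?w $ (s * k + c)) * X $$ (s * k + c, s * k + c') * ?w $ (s * k + c'))"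
    by (intro sum.cong refl sum_eq_single) (use s in \<open>auto simp: w\<close>)
  also have "\<dots> = (\<Sum>c<k. \<Sum>c'<k. cnj (u c) * X $$ (s * k + c, s * k + c') * u c')"
    using s by (intro sum.cong refl) (simp add: w)
  finally show ?thesis .
qed

text \<open>Measure in the computational basis and prepare \<open>|f s\<rangle>\<close>.\<close>
definition relabel_channel :: "nat \<Rightarrow> nat \<Rightarrow> (nat \<Rightarrow> nat) \<Rightarrow> complex mat \<Rightarrow> complex mat" where
  "relabel_channel d n f Y = mat_diag n (\<lambda>p. \<Sum>s<d. if f s = p then Y $$ (s,s) else 0)"

lemma tensor_id_relabel_channel_entry:
  assumes "p < n" "c < k" "p' < n" "c' < k"
  shows "tensor_id d n k (relabel_channel d n f) X $$ (p * k + c, p' * k + c')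
    = (if p = p' then \<Sum>s<d. if f s = p then X $$ (s * k + c, s * k + c') else 0 else 0)"
  using assms mult_add_less_mult[OF assms(1,2)] mult_add_less_mult[OF assms(3,4)]
  by (auto simp: tensor_id_def relabel_channel_def mat_diag_def intro!: sum.cong)

text \<open>Kraus form of the relabelling channel: the vectors on the right are
  \<open>(|s\<rangle>\<langle>f s| \<otimes> 1) v\<close>.\<close>
lemma quad_form_tensor_id_relabel_channel:
  assumes f: "\<forall>s<d. f s < n"
  shows "quad_form (n * k) (tensor_id d n k (relabel_channel d n f) X) v
    = (\<Sum>s<d. quad_form (d * k) X (vec (d * k) (\<lambda>i. if i div k = s then v $ (f s * k + i mod k) else 0)))"
proof -
  let ?Y = "tensor_id d n k (relabel_channel d n f) X"
  define G where "G s c c' = cnj (v $ (f s * k + c)) * X $$ (s * k + c, s * k + c') * v $ (f s * k + c')"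
    for s c c'
  have "quad_form (n * k) ?Y v
      = (\<Sum>p<n. \<Sum>c<k. \<Sum>p'<n. \<Sum>c'<k. cnj (v $ (p * k + c)) * ?Y $$ (p * k + c, p' * k + c') * v $ (p' * k + c'))"
    unfolding quad_form_def sum_lessThan_mult_eq ..
  also have "\<dots> = (\<Sum>p<n. \<Sum>c<k. \<Sum>c'<k. \<Sum>s<d. if f s = p then G s c c' else 0)"
  proof (rule sum.cong[OF refl], rule sum.cong[OF refl])
    fix p c assume pc: "p \<in> {..<n}" "c \<in> {..<k}"
    have "(\<Sum>p'<n. \<Sum>c'<k. cnj (v $ (p * k + c)) * ?Y $$ (p * k + c, p' * k + c') * v $ (p' * k + c'))
        = (\<Sum>c'<k. cnj (v $ (p * k + c)) * ?Y $$ (p * k + c, p * k + c') * v $ (p * k + c'))"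
      using pc by (intro sum_eq_single) (auto simp: tensor_id_relabel_channel_entry)
    also have "\<dots> = (\<Sum>c'<k. \<Sum>s<d. if f s = p then G s c c' else 0)"
      using pc by (intro sum.cong refl)
        (auto simp: tensor_id_relabel_channel_entry G_def sum_distrib_left sum_distrib_right intro!: sum.cong)
    finally show "(\<Sum>p'<n. \<Sum>c'<k. cnj (v $ (p * k + c)) * ?Y $$ (p * k + c, p' * k + c') * v $ (p' * k + c'))
        = (\<Sum>c'<k. \<Sum>s<d. if f s = p then G s c c' else 0)" .
  qed
  also have "\<dots> = (\<Sum>s<d. \<Sum>c<k. \<Sum>c'<k. \<Sum>p<n. if f s = p then G s c c' else 0)"
    by (simp add: sum.swap[of _ "{..<d}"] sum.swap[of _ _ "{..<n}"])
  also have "\<dots> = (\<Sum>s<d. \<Sum>c<k. \<Sum>c'<k. G s c c')"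
    using f by (intro sum.cong refl) simp
  also have "\<dots> = (\<Sum>s<d. quad_form (d * k) X (vec (d * k) (\<lambda>i. if i div k = s then v $ (f s * k + i mod k) else 0)))"
  proof (rule sum.cong[OF refl])
    fix s assume "s \<in> {..<d}"
    then show "(\<Sum>c<k. \<Sum>c'<k. G s c c')
      = quad_form (d * k) X (vec (d * k) (\<lambda>i. if i div k = s then v $ (f s * k + i mod k) else 0))"
      using quad_form_block_vec[of s d k X "\<lambda>c. v $ (f s * k + c)"] by (simp add: G_def)
  qed
  finally show ?thesis .
qed

lemma relabel_channel_psd:
  assumes f: "\<forall>s<d. f s < n" and X: "psd (d * k) X"
  shows "psd (n * k) (tensor_id d n k (relabel_channel d n f) X)"
  unfolding psd_iff_quad_form
proof (intro conjI ballI)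
  fix v :: "complex vec"
  let ?w = "\<lambda>s. vec (d * k) (\<lambda>i. if i div k = s then v $ (f s * k + i mod k) else 0)"
  have "Im (quad_form (d * k) X (?w s)) = 0 \<and> 0 \<le> Re (quad_form (d * k) X (?w s))" for s
    using X unfolding psd_iff_quad_form by simp
  then show "Im (quad_form (n * k) (tensor_id d n k (relabel_channel d n f) X) v) = 0"
    and "0 \<le> Re (quad_form (n * k) (tensor_id d n k (relabel_channel d n f) X) v)"
    by (simp_all add: quad_form_tensor_id_relabel_channel[OF f] Im_sum Re_sum sum_nonneg)
qed (simp add: tensor_id_def)

lemma relabel_channel_channel:
  assumes f: "\<forall>s<d. f s < n"
  shows "channel d n (relabel_channel d n f)"
  unfolding channel_def
proof (intro conjI ballI allI impI)
  fix X Y :: "complex mat" and c :: complex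
  assume X: "X \<in> carrier_mat d d" and Y: "Y \<in> carrier_mat d d"
  show "relabel_channel d n f (X + Y) = relabel_channel d n f X + relabel_channel d n f Y"
    using X Y by (intro eq_matI) (auto simp: relabel_channel_def mat_diag_def sum.distrib[symmetric] intro!: sum.cong)
  show "relabel_channel d n f (c \<cdot>\<^sub>m X) = c \<cdot>\<^sub>m relabel_channel d n f X"
    using X by (intro eq_matI) (auto simp: relabel_channel_def mat_diag_def sum_distrib_left intro!: sum.cong)
next
  fix X :: "complex mat" assume X: "X \<in> carrier_mat d d"
  show "relabel_channel d n f X \<in> carrier_mat n n"
    by (simp add: relabel_channel_def)
  have "mtrace (relabel_channel d n f X) = (\<Sum>p<n. \<Sum>s<d. if f s = p then X $$ (s,s) else 0)"
    by (simp add: mtrace_def relabel_channel_def mat_diag_def)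
  also have "\<dots> = (\<Sum>s<d. X $$ (s,s))"
    using f by (subst sum.swap) simp
  also have "\<dots> = mtrace X"
    using X by (simp add: mtrace_def)
  finally show "mtrace (relabel_channel d n f X) = mtrace X" .
qed (use f relabel_channel_psd in blast)

text \<open>The entries of \<open>|I\<rangle>\<rangle>\<langle>\<langle>I|\<close> in \<open>choi\<close> sit at the multiples of \<open>n + 1\<close>, i.e. at the
  indices \<open>s * n + a\<close> with \<open>s = a\<close>.\<close>
lemma Suc_dvd_mult_add_iff:
  assumes "s < n" "a < n"
  shows "Suc n dvd s * n + a \<longleftrightarrow> s = a"
proof -
  have "int (s * n + a) = int s * int (Suc n) + (int a - int s)"
    by (simp add: algebra_simps)
  then have "Suc n dvd s * n + a \<longleftrightarrow> int (Suc n) dvd int a - int s"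
    by (metis dvd_add_right_iff dvd_triv_right int_dvd_int_iff)
  also have "\<dots> \<longleftrightarrow> s = a"
  proof
    assume "int (Suc n) dvd int a - int s"
    then show "s = a"
      using dvd_imp_le_int[of "int a - int s" "int (Suc n)"] assms by (cases "s = a") auto
  qed simp
  finally show ?thesis .
qed

lemma choi_diag_entry:
  assumes i: "i < d * n"
  shows "choi n d \<psi> $$ (i,i) = \<psi> (munit n (i mod n) (i mod n)) $$ (i div n, i div n)"
proof -
  have a: "i mod n < n" using div_mod_less_mult[OF i] by simp
  have "mat n n (\<lambda>(s,s'). mat (n * n) (n * n)
          (\<lambda>(a,b). if a mod (n + 1) = 0 \<and> b mod (n + 1) = 0 then 1 else 0) $$ (s * n + i mod n, s' * n + i mod n))
      = munit n (i mod n) (i mod n)"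
    by (rule eq_matI) (use a in \<open>auto simp: munit_def mult_add_less_mult Suc_dvd_mult_add_iff\<close>)
  then show ?thesis using i unfolding choi_def tensor_id_def by simp
qed

lemma hs_adjoint_munit_diag_entry:
  assumes A: "\<alpha> (munit d k k) \<in> carrier_mat n n" and k: "k < d" and a: "a < n"
  shows "hs_adjoint d \<alpha> (munit n a a) $$ (k,k) = cnj (\<alpha> (munit d k k) $$ (a,a))"
proof -
  have "mtrace (cadj (\<alpha> (munit d k k)) * munit n a a)
      = (\<Sum>u<n. if u = a then cnj (\<alpha> (munit d k k) $$ (a,a)) else 0)"
    unfolding mtrace_def using A
    by (intro sum.cong) (auto simp: cadj_def munit_def scalar_prod_def if_distrib if_distribR
        lessThan_atLeast0[symmetric] cong: if_cong)
  then show ?thesis using k a by (simp add: hs_adjoint_def)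
qed

lemma cq_state_block:
  assumes \<rho>: "\<forall>x<n. \<rho> x \<in> carrier_mat dA dA" and a: "a < n" and b: "b < n"
  shows "mat dA dA (\<lambda>(s,s'). cq_state dA n lam \<rho> $$ (s * n + a, s' * n + b))
    = (if a = b then complex_of_real (lam a) \<cdot>\<^sub>m \<rho> a else 0\<^sub>m dA dA)"
proof (rule eq_matI)
  fix s s' assume "s < dim_row (if a = b then complex_of_real (lam a) \<cdot>\<^sub>m \<rho> a else 0\<^sub>m dA dA)"
    "s' < dim_col (if a = b then complex_of_real (lam a) \<cdot>\<^sub>m \<rho> a else 0\<^sub>m dA dA)"
  then have s: "s < dA" "s' < dA" using \<rho> a by (auto split: if_splits)
  have "(complex_of_real (lam x) \<cdot>\<^sub>m kron (\<rho> x) (munit n x x)) $$ (s * n + a, s' * n + b)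
      = (if x = a then (if a = b then complex_of_real (lam a) * \<rho> a $$ (s,s') else 0) else 0)"
    if "x < n" for x
    using that s a b \<rho> mult_add_less_mult[OF s(1) a] mult_add_less_mult[OF s(2) b]
    by (auto simp: kron_def munit_def)
  then have "cq_state dA n lam \<rho> $$ (s * n + a, s' * n + b)
      = (\<Sum>x<n. if x = a then (if a = b then complex_of_real (lam a) * \<rho> a $$ (s,s') else 0) else 0)"
    unfolding cq_state_def msum_def using mult_add_less_mult[OF s(1) a] mult_add_less_mult[OF s(2) b]
    by simp
  then show "mat dA dA (\<lambda>(s,s'). cq_state dA n lam \<rho> $$ (s * n + a, s' * n + b)) $$ (s,s')
      = (if a = b then complex_of_real (lam a) \<cdot>\<^sub>m \<rho> a else 0\<^sub>m dA dA) $$ (s,s')"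
    using s a b \<rho>[rule_format, OF b] by simp
qed (use \<rho> a in auto)

lemma tensor_id_qc_channel_cq_state:
  assumes \<rho>: "\<forall>x<n. \<rho> x \<in> carrier_mat dA dA" and M: "\<forall>j<m. M j \<in> carrier_mat dA dA"
  shows "tensor_id dA m n (qc_channel m M) (cq_state dA n lam \<rho>)
    = mat_diag (m * n) (\<lambda>i. complex_of_real (lam (i mod n)) * mtrace (\<rho> (i mod n) * M (i div n)))"
proof (rule eq_matI)
  fix i j assume "i < dim_row (mat_diag (m * n) (\<lambda>i. complex_of_real (lam (i mod n)) * mtrace (\<rho> (i mod n) * M (i div n))))"
    "j < dim_col (mat_diag (m * n) (\<lambda>i. complex_of_real (lam (i mod n)) * mtrace (\<rho> (i mod n) * M (i div n))))"
  then have i: "i < m * n" and j: "j < m * n" by (auto simp: mat_diag_def)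
  note ij = div_mod_less_mult[OF i] div_mod_less_mult[OF j]
  have \<rho>M: "mtrace ((complex_of_real (lam x) \<cdot>\<^sub>m \<rho> x) * M k) = complex_of_real (lam x) * mtrace (\<rho> x * M k)"
    if "x < n" "k < m" for x k
  proof -
    have "\<rho> x \<in> carrier_mat dA dA" "M k \<in> carrier_mat dA dA" using that \<rho> M by auto
    then show ?thesis by (simp add: mult_smult_assoc_mat mtrace_smult[of _ dA])
  qed
  have "tensor_id dA m n (qc_channel m M) (cq_state dA n lam \<rho>) $$ (i,j)
      = qc_channel m M (if i mod n = j mod n then complex_of_real (lam (i mod n)) \<cdot>\<^sub>m \<rho> (i mod n) else 0\<^sub>m dA dA)
          $$ (i div n, j div n)"
    using i j ij by (simp add: tensor_id_def cq_state_block[OF \<rho>])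
  also have "\<dots> = (if i = j then complex_of_real (lam (i mod n)) * mtrace (\<rho> (i mod n) * M (i div n)) else 0)"
  proof (cases "i = j")
    case True
    then show ?thesis using ij \<rho>M by (simp add: qc_channel_def)
  next
    case False
    then have "i div n \<noteq> j div n \<or> i mod n \<noteq> j mod n"
      by (metis div_mult_mod_eq)
    then show ?thesis using False ij M by (auto simp: qc_channel_def mtrace_def)
  qed
  finally show "tensor_id dA m n (qc_channel m M) (cq_state dA n lam \<rho>) $$ (i,j)
    = mat_diag (m * n) (\<lambda>i. complex_of_real (lam (i mod n)) * mtrace (\<rho> (i mod n) * M (i div n))) $$ (i,j)"
    using i j by (simp add: mat_diag_def)
qed (simp_all add: tensor_id_def mat_diag_def)

definition joint_prob :: "(nat \<Rightarrow> real) \<Rightarrow> (nat \<Rightarrow> complex mat) \<Rightarrow> (nat \<Rightarrow> complex mat) \<Rightarrow> nat \<Rightarrow> nat \<Rightarrow> real" where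
  "joint_prob lam \<rho> M x j = lam x * Re (mtrace (\<rho> x * M j))"

lemma Re_mtrace_qc_channel_mult:
  assumes N: "psd m N"
  shows "Re (mtrace (qc_channel m M \<sigma> * N)) = (\<Sum>j<m. Re (N $$ (j,j)) * Re (mtrace (\<sigma> * M j)))"
  using psd_diag_entry[OF N]
  by (simp add: qc_channel_eq_mat_diag mtrace_mat_diag_mult[OF psd_carrier_mat[OF N]] Re_sum mult.commute)

lemma pairing_qc_channel_cq_state:
  assumes \<rho>: "\<forall>x<n. \<rho> x \<in> carrier_mat dA dA" and M: "\<forall>j<m. M j \<in> carrier_mat dA dA"
    and \<alpha>: "\<forall>j<m. \<alpha> (munit m j j) \<in> carrier_mat n n"
  shows "pairing m n (tensor_id dA m n (qc_channel m M) (cq_state dA n lam \<rho>)) \<alpha>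
    = (\<Sum>j<m. \<Sum>x<n. complex_of_real (lam x) * mtrace (\<rho> x * M j) * cnj (\<alpha> (munit m j j) $$ (x,x)))"
proof -
  have C: "choi n m (hs_adjoint m \<alpha>) \<in> carrier_mat (m * n) (m * n)"
    by (simp add: choi_def tensor_id_def)
  have "choi n m (hs_adjoint m \<alpha>) $$ (j * n + x, j * n + x) = cnj (\<alpha> (munit m j j) $$ (x,x))"
    if "j < m" "x < n" for j x
    using that \<alpha> by (simp add: choi_diag_entry mult_add_less_mult hs_adjoint_munit_diag_entry)
  then show ?thesis
    unfolding pairing_def tensor_id_qc_channel_cq_state[OF \<rho> M] mtrace_mat_diag_mult[OF C] sum_lessThan_mult_eq
    by (intro sum.cong refl) simp
qed

lemma Re_pairing_qc_channel_cq_state: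
  assumes \<rho>: "\<forall>x<n. \<rho> x \<in> carrier_mat dA dA" and M: "\<forall>j<m. M j \<in> carrier_mat dA dA"
    and \<alpha>: "channel m n \<alpha>"
  shows "Re (pairing m n (tensor_id dA m n (qc_channel m M) (cq_state dA n lam \<rho>)) \<alpha>)
    = (\<Sum>j<m. \<Sum>x<n. Re (\<alpha> (munit m j j) $$ (x,x)) * joint_prob lam \<rho> M x j)"
proof -
  have \<alpha>_munit: "\<forall>j<m. \<alpha> (munit m j j) \<in> carrier_mat n n"
    using channel_carrier[OF \<alpha>] by (simp add: munit_def)
  show ?thesis
    unfolding pairing_qc_channel_cq_state[OF \<rho> M \<alpha>_munit] Re_sum
    by (intro sum.cong refl) (simp add: channel_munit_diag(2)[OF \<alpha>] joint_prob_def)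
qed

lemma Psucc_Q_eq_optimal_guess:
  assumes f: "optimal_guess n m (joint_prob lam \<rho> M) f"
  shows "Psucc_Q n lam \<rho> m M = (\<Sum>j<m. joint_prob lam \<rho> M (f j) j)"
proof -
  have average: "(\<Sum>x<n. \<Sum>j<m. lam x * p x j * Re (mtrace (\<rho> x * M j)))
      = (\<Sum>j<m. \<Sum>x<n. p x j * joint_prob lam \<rho> M x j)" for p
    by (subst sum.swap) (simp add: joint_prob_def ac_simps)
  show ?thesis
    unfolding Psucc_Q_def
  proof (rule cSup_eq_optimal_guess[OF f])
    fix y assume "y \<in> {\<Sum>x<n. \<Sum>j<m. lam x * p x j * Re (mtrace (\<rho> x * M j)) | p.
        (\<forall>x<n. \<forall>j<m. 0 \<le> p x j) \<and> (\<forall>j<m. (\<Sum>x<n. p x j) = 1)}"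
    then show "\<exists>w. stochastic n m w \<and> y = (\<Sum>j<m. \<Sum>x<n. w x j * joint_prob lam \<rho> M x j)"
      by (auto simp: stochastic_def average)
  next
    let ?p = "\<lambda>x j. if x = f j then 1 else 0 :: real"
    have f_range: "\<forall>j<m. f j < n"
      using f by (simp add: optimal_guess_def)
    then have "stochastic n m ?p"
      by (rule stochastic_deterministic)
    moreover have "(\<Sum>x<n. \<Sum>j<m. lam x * ?p x j * Re (mtrace (\<rho> x * M j))) = (\<Sum>j<m. joint_prob lam \<rho> M (f j) j)"
      unfolding average using f_range by (intro sum_deterministic_average) simp_all
    ultimately show "(\<Sum>j<m. joint_prob lam \<rho> M (f j) j) \<in> {\<Sum>x<n. \<Sum>j<m. lam x * p x j * Re (mtrace (\<rho> x * M j)) | p.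
        (\<forall>x<n. \<forall>j<m. 0 \<le> p x j) \<and> (\<forall>j<m. (\<Sum>x<n. p x j) = 1)}"
      unfolding stochastic_def by (intro CollectI exI[of _ ?p]) auto
  qed
qed

lemma sum_Re_mtrace_qc_channel_mult:
  assumes "\<forall>x<n. psd m (N x)"
  shows "(\<Sum>x<n. lam x * Re (mtrace (qc_channel m M (\<rho> x) * N x)))
    = (\<Sum>j<m. \<Sum>x<n. Re (N x $$ (j,j)) * joint_prob lam \<rho> M x j)"
  using assms by (subst sum.swap)
    (simp add: Re_mtrace_qc_channel_mult joint_prob_def sum_distrib_left ac_simps)

lemma Psucc_qc_channel_eq_optimal_guess:
  assumes f: "optimal_guess n m (joint_prob lam \<rho> M) f"
  shows "Psucc m n lam (\<lambda>x. qc_channel m M (\<rho> x)) = (\<Sum>j<m. joint_prob lam \<rho> M (f j) j)"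
  unfolding Psucc_def
proof (rule cSup_eq_optimal_guess[OF f])
  fix y assume "y \<in> {\<Sum>x<n. lam x * Re (mtrace (qc_channel m M (\<rho> x) * N x)) | N. povm m n N}"
  then obtain N where N: "povm m n N"
    and y: "y = (\<Sum>x<n. lam x * Re (mtrace (qc_channel m M (\<rho> x) * N x)))" by blast
  have psd: "\<forall>x<n. psd m (N x)" using N by (simp add: povm_def)
  have "(\<Sum>x<n. N x $$ (j,j)) = 1" if "j < m" for j
  proof -
    have "msum m N {..<n} $$ (j,j) = 1" using N that by (simp add: povm_def)
    then show ?thesis using that by (simp add: msum_def)
  qed
  moreover have "0 \<le> Re (N x $$ (j,j))" if "x < n" "j < m" for x j
    using psd psd_diag_entry that by blast
  ultimately have "stochastic n m (\<lambda>x j. Re (N x $$ (j,j)))"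
    by (simp add: stochastic_def flip: Re_sum)
  then show "\<exists>w. stochastic n m w \<and> y = (\<Sum>j<m. \<Sum>x<n. w x j * joint_prob lam \<rho> M x j)"
    using y sum_Re_mtrace_qc_channel_mult[OF psd] by blast
next
  define N where "N x = mat_diag m (\<lambda>j. if f j = x then 1 else 0 :: complex)" for x
  have psd: "\<forall>x<n. psd m (N x)"
    by (simp add: N_def psd_mat_diag)
  have "msum m N {..<n} = 1\<^sub>m m"
    using f by (intro eq_matI) (auto simp: msum_def N_def mat_diag_def optimal_guess_def)
  then have "povm m n N"
    using psd by (simp add: povm_def)
  moreover have "(\<Sum>x<n. lam x * Re (mtrace (qc_channel m M (\<rho> x) * N x))) = (\<Sum>j<m. joint_prob lam \<rho> M (f j) j)"
    unfolding sum_Re_mtrace_qc_channel_mult[OF psd]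
    using f by (intro sum_deterministic_average) (auto simp: N_def mat_diag_def optimal_guess_def)
  ultimately show "(\<Sum>j<m. joint_prob lam \<rho> M (f j) j) \<in> {\<Sum>x<n. lam x * Re (mtrace (qc_channel m M (\<rho> x) * N x)) | N. povm m n N}"
    by (auto intro!: exI[of _ N])
qed

lemma dnorm_RS_qc_channel_cq_state_eq_optimal_guess:
  assumes \<rho>: "\<forall>x<n. \<rho> x \<in> carrier_mat dA dA" and M: "\<forall>j<m. M j \<in> carrier_mat dA dA"
    and f: "optimal_guess n m (joint_prob lam \<rho> M) f"
  shows "dnorm_RS m n (tensor_id dA m n (qc_channel m M) (cq_state dA n lam \<rho>))
    = (\<Sum>j<m. joint_prob lam \<rho> M (f j) j)"
  unfolding dnorm_RS_def
proof (rule cSup_eq_optimal_guess[OF f])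
  fix y assume "y \<in> {Re (pairing m n (tensor_id dA m n (qc_channel m M) (cq_state dA n lam \<rho>)) \<alpha>) | \<alpha>. channel m n \<alpha>}"
  then obtain \<alpha> where \<alpha>: "channel m n \<alpha>"
    and "y = Re (pairing m n (tensor_id dA m n (qc_channel m M) (cq_state dA n lam \<rho>)) \<alpha>)" by blast
  then show "\<exists>w. stochastic n m w \<and> y = (\<Sum>j<m. \<Sum>x<n. w x j * joint_prob lam \<rho> M x j)"
    using channel_munit_diag(1)[OF \<alpha>] Re_pairing_qc_channel_cq_state[OF \<rho> M \<alpha>] by blast
next
  have f_range: "\<forall>j<m. f j < n" using f by (simp add: optimal_guess_def)
  have \<alpha>: "channel m n (relabel_channel m n f)"
    by (rule relabel_channel_channel[OF f_range])
  have "Re (relabel_channel m n f (munit m j j) $$ (x,x)) = (if x = f j then 1 else 0)"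
    if "j < m" "x < n" for j x
  proof -
    have "relabel_channel m n f (munit m j j) $$ (x,x) = (\<Sum>s<m. if f s = x then munit m j j $$ (s,s) else 0)"
      using that by (simp add: relabel_channel_def mat_diag_def)
    also have "\<dots> = (\<Sum>s<m. if s = j then (if x = f j then 1 else 0) else 0)"
      by (intro sum.cong) (auto simp: munit_def)
    finally show ?thesis
      using that by simp
  qed
  then have "Re (pairing m n (tensor_id dA m n (qc_channel m M) (cq_state dA n lam \<rho>)) (relabel_channel m n f))
      = (\<Sum>j<m. joint_prob lam \<rho> M (f j) j)"
    unfolding Re_pairing_qc_channel_cq_state[OF \<rho> M \<alpha>] using f_range
    by (intro sum_deterministic_average) auto
  then show "(\<Sum>j<m. joint_prob lam \<rho> M (f j) j)
      \<in> {Re (pairing m n (tensor_id dA m n (qc_channel m M) (cq_state dA n lam \<rho>)) \<alpha>) | \<alpha>. channel m n \<alpha>}"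
    using \<alpha> by (auto intro!: exI[of _ "relabel_channel m n f"])
qed

theorem lemma4:
  fixes dA dS n :: nat and lam :: "nat \<Rightarrow> real" and \<rho> M :: "nat \<Rightarrow> complex mat"
  assumes "ensemble dA n lam \<rho>"
    and "povm dA dS M"
  shows "Psucc_Q n lam \<rho> dS M
           = dnorm_RS dS n (tensor_id dA dS n (qc_channel dS M) (cq_state dA n lam \<rho>))
       \<and> dnorm_RS dS n (tensor_id dA dS n (qc_channel dS M) (cq_state dA n lam \<rho>))
           = Psucc dS n lam (\<lambda>x. qc_channel dS M (\<rho> x))"
proof -
  have "0 < n"
    using assms(1) unfolding ensemble_def by (metis gr0I lessThan_0 sum.empty zero_neq_one)
  then obtain f where f: "optimal_guess n dS (joint_prob lam \<rho> M) f"
    using optimal_guess_exists by blast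
  have \<rho>: "\<forall>x<n. \<rho> x \<in> carrier_mat dA dA"
    using assms(1) by (simp add: ensemble_def state_def psd_carrier_mat)
  have M: "\<forall>j<dS. M j \<in> carrier_mat dA dA"
    using assms(2) by (simp add: povm_def psd_carrier_mat)
  show ?thesis
    using Psucc_Q_eq_optimal_guess[OF f] Psucc_qc_channel_eq_optimal_guess[OF f]
      dnorm_RS_qc_channel_cq_state_eq_optimal_guess[OF \<rho> M f]
    by simp
qed

end
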